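(* Let $K$ be a compact subset of $[0,1]$ and let $\boldsymbol\eta_K=(\eta_t)_{t\in K}$ be a max-stable process on $K$ with standard negative exponential margins, i.e. $P(\eta_t\le x)=\exp(x)$ for $x\le 0$, $t\in K$, which realizes in the space $\bar C^-(K):=\{f:K\to(-\infty,0]:\ f\text{ continuous}\}$. Then \[ P\Big(\max_{t\in K}\eta_t<0\Big)=1. \]
   Context: A process $\boldsymbol\eta_K$ with continuous paths on $K$ is called max-stable if for independent copies $\boldsymbol\eta_K^{(1)},\boldsymbol\eta_K^{(2)},\dots$ of $\boldsymbol\eta_K$ and every $n\in\mathbb N$ there exist functions $a_n>0$, $b_n$ on $K$ such that $\boldsymbol\eta_K$ has the same distribution as $\max_{1\le i\le n}(\boldsymbol\eta_K^{(i)}-b_n)/a_n$, the maximum and all operations being taken pointwise. *)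

theory Defs
  imports "HOL-Probability.Probability"
begin

text \<open>A stochastic process on an index set K is given as eta :: 'a => real => real,
  eta omega t being the value at time t in the sample point omega of the
  probability space M. The maximum of n independent
  copies is realized on the product probability space of n copies of M.\<close>

definition process_law :: "'a measure \<Rightarrow> real set \<Rightarrow> ('a \<Rightarrow> real \<Rightarrow> real) \<Rightarrow> (real \<Rightarrow> real) measure" where
  "process_law M K eta = distr M (PiM K (\<lambda>_. borel)) (\<lambda>\<omega>. restrict (eta \<omega>) K)"

definition max_stable :: "'a measure \<Rightarrow> real set \<Rightarrow> ('a \<Rightarrow> real \<Rightarrow> real) \<Rightarrow> bool" where
  "max_stable M K eta \<longleftrightarrow>
     (\<forall>n::nat. n \<ge> 1 \<longrightarrow>
        (\<exists>a b :: real \<Rightarrow> real. (\<forall>t\<in>K. a t > 0) \<and>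
           process_law M K eta =
           distr (PiM {..<n} (\<lambda>_. M)) (PiM K (\<lambda>_. borel))
             (\<lambda>\<omega>. \<lambda>t\<in>K. Max ((\<lambda>i. (eta (\<omega> i) t - b t) / a t) ` {..<n}))))"

end

theory Submission
  imports Defs
begin

text \<open>Max-stability for two copies, combined with the standard negative exponential margins,
  forces the norming constants \<open>a = 1/2\<close>, \<open>b = 0\<close>: the process has the law of
  \<open>max (2\<eta>', 2\<eta>'')\<close> for two independent copies. For countable \<open>D \<subseteq> K\<close> the event that
  \<open>\<eta>\<close> gets arbitrarily close to 0 on \<open>D\<close> therefore has a probability \<open>p\<close> with
  \<open>p = 1 - (1 - p)\<^sup>2\<close>, so \<open>p \<in> {0, 1}\<close>. If \<open>p = 1\<close> for a countable dense \<open>D\<close>, compactness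
  localises this to a point \<open>t\<close> at which the event has probability one on every neighbourhood,
  and continuity of the paths gives \<open>\<eta>\<^sub>t = 0\<close> almost surely, contradicting
  \<open>P(\<eta>\<^sub>t \<le> -1) = exp (-1)\<close>.\<close>

text \<open>For \<open>f \<le> 0\<close> this says \<open>Sup (f ` D) = 0\<close>; the countable quantifier makes it a
  measurable event when \<open>D\<close> is countable.\<close>

definition sup_ge_zero_on :: "'b set \<Rightarrow> ('b \<Rightarrow> real) \<Rightarrow> bool" where
  "sup_ge_zero_on D f \<longleftrightarrow> (\<forall>m::nat. \<exists>s\<in>D. - 1 / real (Suc m) < f s)"

lemma sup_ge_zero_on_iff: "sup_ge_zero_on D f \<longleftrightarrow> (\<forall>e>0. \<exists>s\<in>D. - e < f s)"
proof
  assume h: "sup_ge_zero_on D f"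
  show "\<forall>e>0. \<exists>s\<in>D. - e < f s"
  proof (intro allI impI)
    fix e :: real assume "e > 0"
    then obtain m where "inverse (real (Suc m)) < e" using reals_Archimedean by blast
    moreover obtain s where "s \<in> D" "- 1 / real (Suc m) < f s"
      using h unfolding sup_ge_zero_on_def by blast
    ultimately show "\<exists>s\<in>D. - e < f s"
      by (intro bexI[of _ s]) (auto simp: inverse_eq_divide)
  qed
qed (simp add: sup_ge_zero_on_def)

lemma sup_ge_zero_on_empty [simp]: "\<not> sup_ge_zero_on {} f"
  by (simp add: sup_ge_zero_on_def)

lemma sup_ge_zero_on_cong:
  "(\<And>s. s \<in> D \<Longrightarrow> f s = g s) \<Longrightarrow> sup_ge_zero_on D f \<longleftrightarrow> sup_ge_zero_on D g"
  by (simp add: sup_ge_zero_on_def)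

lemma sup_ge_zero_on_mono: "D \<subseteq> D' \<Longrightarrow> sup_ge_zero_on D f \<Longrightarrow> sup_ge_zero_on D' f"
  unfolding sup_ge_zero_on_def by blast

lemma sup_ge_zero_on_scale:
  assumes "c > 0"
  shows "sup_ge_zero_on D (\<lambda>s. c * f s) \<longleftrightarrow> sup_ge_zero_on D f"
proof -
  have "- e < c * x \<longleftrightarrow> - (e / c) < x" for e x
    using assms by (simp add: field_simps)
  moreover have "e > 0 \<longleftrightarrow> e / c > 0" for e
    using assms by (simp add: zero_less_divide_iff)
  ultimately show ?thesis
    unfolding sup_ge_zero_on_iff using assms
    by (metis nonzero_mult_div_cancel_left order_less_irrefl)
qed

lemma sup_ge_zero_on_max:
  "sup_ge_zero_on D (\<lambda>s. max (f s) (g s)) \<longleftrightarrow> sup_ge_zero_on D f \<or> sup_ge_zero_on D g"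
proof
  assume h: "sup_ge_zero_on D (\<lambda>s. max (f s) (g s))"
  show "sup_ge_zero_on D f \<or> sup_ge_zero_on D g"
  proof (rule ccontr)
    assume "\<not> ?thesis"
    then obtain e1 e2 :: real where "e1 > 0" "e2 > 0"
      and "\<forall>s\<in>D. f s \<le> - e1" "\<forall>s\<in>D. g s \<le> - e2"
      unfolding sup_ge_zero_on_iff by (auto simp: not_less)
    moreover obtain s where "s \<in> D" "- min e1 e2 < max (f s) (g s)"
      using h \<open>e1 > 0\<close> \<open>e2 > 0\<close> unfolding sup_ge_zero_on_iff by (metis min_less_iff_conj)
    ultimately show False by (auto simp: max_def min_def split: if_splits)
  qed
qed (fastforce simp: sup_ge_zero_on_iff less_max_iff_disj)

lemma sup_ge_zero_on_Un:
  "sup_ge_zero_on (A \<union> B) f \<longleftrightarrow> sup_ge_zero_on A f \<or> sup_ge_zero_on B f"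
proof
  assume h: "sup_ge_zero_on (A \<union> B) f"
  show "sup_ge_zero_on A f \<or> sup_ge_zero_on B f"
  proof (rule ccontr)
    assume "\<not> ?thesis"
    then obtain e1 e2 :: real where "e1 > 0" "e2 > 0"
      and "\<forall>s\<in>A. f s \<le> - e1" "\<forall>s\<in>B. f s \<le> - e2"
      unfolding sup_ge_zero_on_iff by (auto simp: not_less)
    moreover obtain s where "s \<in> A \<union> B" "- min e1 e2 < f s"
      using h \<open>e1 > 0\<close> \<open>e2 > 0\<close> unfolding sup_ge_zero_on_iff by (metis min_less_iff_conj)
    ultimately show False by (auto simp: min_def split: if_splits)
  qed
qed (auto simp: sup_ge_zero_on_def)

lemma sup_ge_zero_on_finite_UN:
  assumes "finite T" "sup_ge_zero_on (\<Union>t\<in>T. C t) f"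
  shows "\<exists>t\<in>T. sup_ge_zero_on (C t) f"
  using assms by (induction T rule: finite_induct) (auto simp: sup_ge_zero_on_Un)

lemma SUP_less_zero_iff_not_sup_ge_zero_on:
  fixes f :: "'b::metric_space \<Rightarrow> real"
  assumes f: "continuous_on K f" and "K \<noteq> {}" and nonpos: "\<forall>t\<in>K. f t \<le> 0"
    and "D \<subseteq> K" and dense: "K \<subseteq> closure D"
  shows "(SUP t\<in>K. f t) < 0 \<longleftrightarrow> \<not> sup_ge_zero_on D f"
proof
  have bdd: "bdd_above (f ` K)" using nonpos by (auto intro: bdd_aboveI[of _ 0])
  assume neg: "(SUP t\<in>K. f t) < 0"
  show "\<not> sup_ge_zero_on D f"
  proof
    assume "sup_ge_zero_on D f"
    then obtain s where "s \<in> D" "(SUP t\<in>K. f t) < f s"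
      using neg unfolding sup_ge_zero_on_iff by (force dest!: spec[of _ "- (SUP t\<in>K. f t)"])
    moreover have "f s \<le> (SUP t\<in>K. f t)"
      using \<open>s \<in> D\<close> \<open>D \<subseteq> K\<close> bdd by (intro cSUP_upper) auto
    ultimately show False by simp
  qed
next
  assume "\<not> sup_ge_zero_on D f"
  then obtain e :: real where "e > 0" and below: "\<forall>s\<in>D. f s \<le> - e"
    unfolding sup_ge_zero_on_iff by (auto simp: not_less)
  have "f t \<le> - e" if "t \<in> K" for t
  proof (rule ccontr)
    assume "\<not> f t \<le> - e"
    then have "f t + e > 0" by simp
    then obtain \<delta> where "\<delta> > 0" and near: "\<And>s. s \<in> K \<Longrightarrow> dist s t < \<delta> \<Longrightarrow> dist (f s) (f t) < f t + e"
      using continuous_on_iff[THEN iffD1, OF f, rule_format, OF \<open>t \<in> K\<close>] by blast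
    obtain s where "s \<in> D" "dist s t < \<delta>"
      using dense \<open>t \<in> K\<close> \<open>\<delta> > 0\<close> closure_approachable by blast
    then have "dist (f s) (f t) < f t + e" using near \<open>D \<subseteq> K\<close> by auto
    with below \<open>s \<in> D\<close> show False by (auto simp: dist_real_def)
  qed
  then have "(SUP t\<in>K. f t) \<le> - e" using \<open>K \<noteq> {}\<close> by (intro cSUP_least) auto
  with \<open>e > 0\<close> show "(SUP t\<in>K. f t) < 0" by simp
qed

lemma nonneg_if_sup_ge_zero_on_balls:
  fixes f :: "'b::metric_space \<Rightarrow> real"
  assumes f: "continuous_on K f" and "t \<in> K" and "D \<subseteq> K"
    and balls: "\<And>e. e > 0 \<Longrightarrow> sup_ge_zero_on (D \<inter> ball t e) f"
  shows "f t \<ge> 0"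
proof (rule ccontr)
  assume "\<not> f t \<ge> 0"
  then have "- f t / 2 > 0" by simp
  then obtain \<delta> where "\<delta> > 0" and near: "\<And>s. s \<in> K \<Longrightarrow> dist s t < \<delta> \<Longrightarrow> dist (f s) (f t) < - f t / 2"
    using continuous_on_iff[THEN iffD1, OF f, rule_format, OF \<open>t \<in> K\<close>] by blast
  obtain s where "s \<in> D \<inter> ball t \<delta>" "- (- f t / 2) < f s"
    using balls[OF \<open>\<delta> > 0\<close>, unfolded sup_ge_zero_on_iff] \<open>- f t / 2 > 0\<close> by blast
  moreover have "dist (f s) (f t) < - f t / 2"
    using near \<open>s \<in> D \<inter> ball t \<delta>\<close> \<open>D \<subseteq> K\<close> by (auto simp: dist_commute)
  ultimately show False by (simp add: dist_real_def)
qed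

lemma sup_ge_zero_on_balls_iff_inverse_Suc:
  "(\<forall>e>0. sup_ge_zero_on (D \<inter> ball t e) f) \<longleftrightarrow> (\<forall>m. sup_ge_zero_on (D \<inter> ball t (1 / Suc m)) f)"
proof (intro iffI allI impI)
  fix e :: real
  assume "\<forall>m. sup_ge_zero_on (D \<inter> ball t (1 / Suc m)) f" and "e > 0"
  moreover obtain m where "inverse (real (Suc m)) < e" using reals_Archimedean \<open>e > 0\<close> by blast
  then have "D \<inter> ball t (1 / Suc m) \<subseteq> D \<inter> ball t e" by (auto simp: inverse_eq_divide)
  ultimately show "sup_ge_zero_on (D \<inter> ball t e) f" by (blast intro: sup_ge_zero_on_mono)
qed simp

lemma sets_sup_ge_zero_on:
  assumes "countable D" "\<And>t. t \<in> D \<Longrightarrow> (\<lambda>x. X x t) \<in> borel_measurable M"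
  shows "{x\<in>space M. sup_ge_zero_on D (X x)} \<in> sets M"
proof -
  have "{x\<in>space M. c < X x t} \<in> sets M" if "t \<in> D" for c t
    using measurable_sets[OF assms(2)[OF that], of "{c<..}"] by (simp add: vimage_def Int_def conj_commute)
  then show ?thesis
    unfolding sup_ge_zero_on_def using \<open>countable D\<close>
    by (intro sets.sets_Collect_countable_All sets.sets_Collect_countable_Ex')
qed

lemma measure_PiM_PiE_const:
  assumes "prob_space M" "finite I" "A \<in> sets M"
  shows "measure (PiM I (\<lambda>_. M)) (PiE I (\<lambda>_. A)) = measure M A ^ card I"
proof -
  interpret product_prob_space "\<lambda>_. M" I
    using assms(1) by (rule product_prob_spaceI)
  interpret finite_product_prob_space "\<lambda>_. M" I
    by unfold_locales (fact assms(2))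
  show ?thesis
    using assms(3) by (simp add: prob_times)
qed

lemma prob_zero_or_one_if_union_of_two_copies:
  assumes "prob_space M" "A \<in> sets M"
    and union: "measure M A = measure (PiM {..<2::nat} (\<lambda>_. M))
                  {\<omega>\<in>space (PiM {..<2} (\<lambda>_. M)). \<omega> 0 \<in> A \<or> \<omega> 1 \<in> A}"
  shows "measure M A = 0 \<or> measure M A = 1"
proof -
  interpret prob_space M by fact
  interpret P: prob_space "PiM {..<2::nat} (\<lambda>_. M)"
    using assms(1) by (rule prob_space_PiM)
  let ?A' = "space M - A"
  have "\<omega> \<in> PiE {..<2} (\<lambda>_. ?A') \<longleftrightarrow> \<not> (\<omega> 0 \<in> A \<or> \<omega> 1 \<in> A)"
    if "\<omega> \<in> PiE {..<2::nat} (\<lambda>_. space M)" for \<omega>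
    using that by (auto simp: PiE_iff less_2_cases_iff)
  then have "{\<omega>\<in>space (PiM {..<2} (\<lambda>_. M)). \<omega> 0 \<in> A \<or> \<omega> 1 \<in> A}
        = space (PiM {..<2::nat} (\<lambda>_. M)) - PiE {..<2} (\<lambda>_. ?A')"
    unfolding space_PiM by blast
  moreover have "PiE {..<2::nat} (\<lambda>_. ?A') \<in> sets (PiM {..<2} (\<lambda>_. M))"
    using assms(2) by (intro sets_PiM_I_finite) auto
  ultimately have "measure M A = 1 - measure (PiM {..<2::nat} (\<lambda>_. M)) (PiE {..<2} (\<lambda>_. ?A'))"
    using union by (simp add: P.prob_compl)
  also have "\<dots> = 1 - (1 - measure M A) ^ 2"
    using assms by (simp add: measure_PiM_PiE_const prob_compl)
  finally have "measure M A * (measure M A - 1) = 0"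
    by (simp add: power2_eq_square algebra_simps)
  then show ?thesis by simp
qed

lemma affine_norming_of_exp_margin:
  fixes a b :: real
  assumes "\<And>y. min y 0 = 2 * min (a * y + b) 0"
  shows "a = 1/2 \<and> b = 0"
  using assms[of 0] assms[of "-1"] assms[of "-2"] by (auto simp: min_def split: if_splits)

lemma measure_distr_restrict:
  assumes "\<And>t. t \<in> K \<Longrightarrow> (\<lambda>\<omega>. Z \<omega> t) \<in> borel_measurable P"
    and "S \<in> sets (PiM K (\<lambda>_. borel))"
  shows "measure (distr P (PiM K (\<lambda>_. borel)) (\<lambda>\<omega>. \<lambda>t\<in>K. Z \<omega> t)) S
         = measure P {\<omega>\<in>space P. (\<lambda>t\<in>K. Z \<omega> t) \<in> S}"
proof -
  have "(\<lambda>\<omega>. \<lambda>t\<in>K. Z \<omega> t) \<in> P \<rightarrow>\<^sub>M PiM K (\<lambda>_. borel)"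
    using assms(1) by (rule measurable_restrict)
  with assms(2) show ?thesis
    by (simp add: measure_distr vimage_def Int_def conj_commute)
qed

lemma measure_distr_restrict_component_le:
  assumes "\<And>t. t \<in> K \<Longrightarrow> (\<lambda>\<omega>. Z \<omega> t) \<in> borel_measurable P" and "s \<in> K"
  shows "measure (distr P (PiM K (\<lambda>_. borel)) (\<lambda>\<omega>. \<lambda>t\<in>K. Z \<omega> t))
           {x\<in>space (PiM K (\<lambda>_. borel)). x s \<le> (y::real)}
         = measure P {\<omega>\<in>space P. Z \<omega> s \<le> y}"
proof -
  have "{x\<in>space (PiM K (\<lambda>_. borel)). x s \<le> y} \<in> sets (PiM K (\<lambda>_. borel))"
    using measurable_sets[OF measurable_component_singleton[OF assms(2)], of "{..y}" "\<lambda>_. borel"]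
    by (simp add: vimage_def Int_def conj_commute)
  then show ?thesis
    using assms by (simp add: measure_distr_restrict space_PiM)
qed

lemma norming_constants_of_neg_exp_margins:
  fixes M :: "'a measure" and eta :: "'a \<Rightarrow> real \<Rightarrow> real"
  assumes "prob_space M"
    and meas: "\<And>t. t \<in> K \<Longrightarrow> (\<lambda>\<omega>. eta \<omega> t) \<in> borel_measurable M"
    and margin: "\<And>t y. t \<in> K \<Longrightarrow> measure M {\<omega>\<in>space M. eta \<omega> t \<le> y} = exp (min y 0)"
    and "s \<in> K" and "a s > 0"
    and law: "process_law M K eta = distr (PiM {..<2} (\<lambda>_. M)) (PiM K (\<lambda>_. borel))
                (\<lambda>\<omega>. \<lambda>t\<in>K. Max ((\<lambda>i. (eta (\<omega> i) t - b t) / a t) ` {..<2::nat}))"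
  shows "a s = 1/2 \<and> b s = 0"
proof (rule affine_norming_of_exp_margin)
  fix y :: real
  let ?Pi2 = "PiM {..<2::nat} (\<lambda>_. M)"
  let ?S = "{x\<in>space (PiM K (\<lambda>_. borel)). x s \<le> y}"
  let ?A = "{\<omega>\<in>space M. eta \<omega> s \<le> a s * y + b s}"
  have "(\<lambda>\<omega>. eta (\<omega> i) t) \<in> borel_measurable ?Pi2" if "i < 2" "t \<in> K" for i t
    using that by (intro measurable_compose[OF measurable_component_singleton[of i "{..<2}" "\<lambda>_. M"] meas[OF that(2)]]) auto
  then have Y_meas: "(\<lambda>\<omega>. Max ((\<lambda>i. (eta (\<omega> i) t - b t) / a t) ` {..<2::nat})) \<in> borel_measurable ?Pi2"
    if "t \<in> K" for t
    using that by (intro borel_measurable_Max) auto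
  have Max_le_iff: "Max ((\<lambda>i. (eta (\<omega> i) s - b s) / a s) ` {..<2::nat}) \<le> y
      \<longleftrightarrow> \<omega> \<in> PiE {..<2} (\<lambda>_. ?A)"
    if "\<omega> \<in> PiE {..<2} (\<lambda>_. space M)" for \<omega>
    using that \<open>a s > 0\<close>
    by (subst Max_le_iff) (auto simp: PiE_iff divide_le_eq algebra_simps lessThan_empty_iff)
  have "exp (min y 0) = measure M {\<omega>\<in>space M. eta \<omega> s \<le> y}"
    using margin[OF \<open>s \<in> K\<close>] by simp
  also have "\<dots> = measure (process_law M K eta) ?S"
    unfolding process_law_def using meas \<open>s \<in> K\<close> by (simp add: measure_distr_restrict_component_le)
  also have "\<dots> = measure ?Pi2 {\<omega>\<in>space ?Pi2. Max ((\<lambda>i. (eta (\<omega> i) s - b s) / a s) ` {..<2}) \<le> y}"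
    unfolding law using Y_meas \<open>s \<in> K\<close> by (rule measure_distr_restrict_component_le)
  also have "{\<omega>\<in>space ?Pi2. Max ((\<lambda>i. (eta (\<omega> i) s - b s) / a s) ` {..<2}) \<le> y} = PiE {..<2} (\<lambda>_. ?A)"
    using Max_le_iff unfolding space_PiM by blast
  also have "measure ?Pi2 (PiE {..<2} (\<lambda>_. ?A)) = exp (min (a s * y + b s) 0) ^ 2"
    using \<open>prob_space M\<close> margin[OF \<open>s \<in> K\<close>] measurable_sets[OF meas[OF \<open>s \<in> K\<close>], of "{..a s * y + b s}"]
    by (subst measure_PiM_PiE_const) (auto simp: vimage_def Int_def conj_commute)
  also have "\<dots> = exp (2 * min (a s * y + b s) 0)"
    by (simp add: power2_eq_square exp_add[symmetric])
  finally show "min y 0 = 2 * min (a s * y + b s) 0" by simp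
qed

lemma max_stable_law_eq_max_of_two_copies:
  fixes M :: "'a measure" and eta :: "'a \<Rightarrow> real \<Rightarrow> real"
  assumes "prob_space M"
    and meas: "\<And>t. t \<in> K \<Longrightarrow> (\<lambda>\<omega>. eta \<omega> t) \<in> borel_measurable M"
    and margin: "\<And>t y. t \<in> K \<Longrightarrow> measure M {\<omega>\<in>space M. eta \<omega> t \<le> y} = exp (min y 0)"
    and "max_stable M K eta"
  shows "process_law M K eta = distr (PiM {..<2::nat} (\<lambda>_. M)) (PiM K (\<lambda>_. borel))
           (\<lambda>\<omega>. \<lambda>t\<in>K. max (2 * eta (\<omega> 0) t) (2 * eta (\<omega> 1) t))"
proof -
  obtain a b where "\<forall>t\<in>K. a t > 0" and law: "process_law M K eta =
      distr (PiM {..<2} (\<lambda>_. M)) (PiM K (\<lambda>_. borel))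
        (\<lambda>\<omega>. \<lambda>t\<in>K. Max ((\<lambda>i. (eta (\<omega> i) t - b t) / a t) ` {..<2::nat}))"
    using \<open>max_stable M K eta\<close> unfolding max_stable_def by (elim allE[of _ 2]) auto
  then have "a t = 1/2 \<and> b t = 0" if "t \<in> K" for t
    using norming_constants_of_neg_exp_margins[of M K eta t a b] assms(1) meas margin that by blast
  then have ab: "\<And>t. t \<in> K \<Longrightarrow> a t = 1/2" "\<And>t. t \<in> K \<Longrightarrow> b t = 0" by auto
  have "(\<lambda>t\<in>K. Max ((\<lambda>i. (eta (\<omega> i) t - b t) / a t) ` {..<2::nat}))
           = (\<lambda>t\<in>K. max (2 * eta (\<omega> 0) t) (2 * eta (\<omega> 1) t))" for \<omega>
    by (intro restrict_ext) (simp add: ab numeral_2_eq_2 lessThan_Suc max.commute)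
  with law show ?thesis by simp
qed

lemma sup_ge_zero_on_event_zero_or_one:
  fixes M :: "'a measure" and eta :: "'a \<Rightarrow> real \<Rightarrow> real"
  assumes "prob_space M"
    and meas: "\<And>t. t \<in> K \<Longrightarrow> (\<lambda>\<omega>. eta \<omega> t) \<in> borel_measurable M"
    and law: "process_law M K eta = distr (PiM {..<2::nat} (\<lambda>_. M)) (PiM K (\<lambda>_. borel))
                (\<lambda>\<omega>. \<lambda>t\<in>K. max (2 * eta (\<omega> 0) t) (2 * eta (\<omega> 1) t))"
    and "countable D" "D \<subseteq> K"
  shows "measure M {\<omega>\<in>space M. sup_ge_zero_on D (eta \<omega>)} \<in> {0, 1}"
proof -
  let ?Pi2 = "PiM {..<2::nat} (\<lambda>_. M)"
  let ?A = "{\<omega>\<in>space M. sup_ge_zero_on D (eta \<omega>)}"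
  let ?S = "{x\<in>space (PiM K (\<lambda>_. borel)). sup_ge_zero_on D x}"
  have S: "?S \<in> sets (PiM K (\<lambda>_. borel))"
    using \<open>countable D\<close> \<open>D \<subseteq> K\<close> by (intro sets_sup_ge_zero_on measurable_component_singleton) auto
  have A: "?A \<in> sets M"
    using \<open>countable D\<close> \<open>D \<subseteq> K\<close> meas by (intro sets_sup_ge_zero_on) auto
  have copy_meas: "(\<lambda>\<omega>. eta (\<omega> i) t) \<in> borel_measurable ?Pi2" if "i < 2" "t \<in> K" for i t
    using that by (intro measurable_compose[OF measurable_component_singleton[of i "{..<2}" "\<lambda>_. M"] meas[OF that(2)]]) auto
  have on_D: "sup_ge_zero_on D (\<lambda>t\<in>K. Z t) \<longleftrightarrow> sup_ge_zero_on D Z" for Z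
    using \<open>D \<subseteq> K\<close> by (intro sup_ge_zero_on_cong) auto
  have "measure M ?A = measure (process_law M K eta) ?S"
    unfolding process_law_def using meas S by (simp add: measure_distr_restrict on_D space_PiM)
  also have "\<dots> = measure ?Pi2 {\<omega>\<in>space ?Pi2. sup_ge_zero_on D (eta (\<omega> 0)) \<or> sup_ge_zero_on D (eta (\<omega> 1))}"
    unfolding law using copy_meas S
    by (simp add: measure_distr_restrict on_D space_PiM sup_ge_zero_on_max sup_ge_zero_on_scale)
  also have "{\<omega>\<in>space ?Pi2. sup_ge_zero_on D (eta (\<omega> 0)) \<or> sup_ge_zero_on D (eta (\<omega> 1))}
           = {\<omega>\<in>space ?Pi2. \<omega> 0 \<in> ?A \<or> \<omega> 1 \<in> ?A}"
  proof -
    have "\<omega> 0 \<in> space M \<and> \<omega> 1 \<in> space M" if "\<omega> \<in> space ?Pi2" for \<omega>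
      using that by (simp add: space_PiM PiE_iff)
    then show ?thesis by blast
  qed
  finally show ?thesis
    using prob_zero_or_one_if_union_of_two_copies[OF assms(1) A] by simp
qed

lemma obtain_point_of_positive_sup_ge_zero_prob:
  fixes eta :: "'a \<Rightarrow> 'b::metric_space \<Rightarrow> real"
  assumes "prob_space M" "compact K" "countable D" "D \<subseteq> K"
    and meas: "\<And>t. t \<in> K \<Longrightarrow> (\<lambda>\<omega>. eta \<omega> t) \<in> borel_measurable M"
    and pos: "measure M {\<omega>\<in>space M. sup_ge_zero_on D (eta \<omega>)} \<noteq> 0"
  obtains t where "t \<in> K"
    "\<And>e. e > 0 \<Longrightarrow> measure M {\<omega>\<in>space M. sup_ge_zero_on (D \<inter> ball t e) (eta \<omega>)} \<noteq> 0"
proof -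
  interpret prob_space M by fact
  define E where "E C = {\<omega>\<in>space M. sup_ge_zero_on C (eta \<omega>)}" for C
  have E_sets: "E (D \<inter> C) \<in> sets M" for C
    unfolding E_def using \<open>countable D\<close> \<open>D \<subseteq> K\<close> meas
    by (intro sets_sup_ge_zero_on) (auto intro: countable_subset)
  show thesis
  proof (rule ccontr)
    assume "\<not> thesis"
    then have "\<forall>t\<in>K. \<exists>e>0. prob (E (D \<inter> ball t e)) = 0"
      using that unfolding E_def by blast
    then obtain r where r: "\<And>t. t \<in> K \<Longrightarrow> r t > 0 \<and> prob (E (D \<inter> ball t (r t))) = 0"
      by metis
    then have "K \<subseteq> (\<Union>t\<in>K. ball t (r t))" by force
    then obtain T where "T \<subseteq> K" "finite T" "K \<subseteq> (\<Union>t\<in>T. ball t (r t))"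
      using compactE_image[OF \<open>compact K\<close>, of K "\<lambda>t. ball t (r t)"] by auto
    then have cover: "(\<Union>t\<in>T. D \<inter> ball t (r t)) = D" using \<open>D \<subseteq> K\<close> by blast
    have "E D \<subseteq> (\<Union>t\<in>T. E (D \<inter> ball t (r t)))"
    proof
      fix \<omega> assume "\<omega> \<in> E D"
      then have "\<omega> \<in> space M" "sup_ge_zero_on (\<Union>t\<in>T. D \<inter> ball t (r t)) (eta \<omega>)"
        unfolding E_def cover by auto
      then show "\<omega> \<in> (\<Union>t\<in>T. E (D \<inter> ball t (r t)))"
        using sup_ge_zero_on_finite_UN[OF \<open>finite T\<close>] unfolding E_def by blast
    qed
    then have "prob (E D) \<le> prob (\<Union>t\<in>T. E (D \<inter> ball t (r t)))"
      using E_sets \<open>finite T\<close> by (intro finite_measure_mono) auto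
    also have "\<dots> \<le> (\<Sum>t\<in>T. prob (E (D \<inter> ball t (r t))))"
      using E_sets \<open>finite T\<close> by (intro measure_UNION_le) auto
    also have "\<dots> = 0" using r \<open>T \<subseteq> K\<close> by (intro sum.neutral) auto
    finally show False using pos measure_nonneg[of M "E D"] unfolding E_def by linarith
  qed
qed

lemma SUP_less_zero_almost_surely:
  fixes eta :: "'a \<Rightarrow> 'b::{metric_space, second_countable_topology} \<Rightarrow> real"
  assumes "prob_space M" "compact K" "K \<noteq> {}"
    and meas: "\<And>t. t \<in> K \<Longrightarrow> (\<lambda>\<omega>. eta \<omega> t) \<in> borel_measurable M"
    and paths: "\<And>\<omega>. \<omega> \<in> space M \<Longrightarrow> continuous_on K (eta \<omega>) \<and> (\<forall>t\<in>K. eta \<omega> t \<le> 0)"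
    and zero_one: "\<And>D. countable D \<Longrightarrow> D \<subseteq> K \<Longrightarrow>
                     measure M {\<omega>\<in>space M. sup_ge_zero_on D (eta \<omega>)} \<in> {0, 1}"
    and not_AE_nonneg: "\<And>t. t \<in> K \<Longrightarrow> \<not> (AE \<omega> in M. eta \<omega> t \<ge> 0)"
  shows "measure M {\<omega>\<in>space M. (SUP t\<in>K. eta \<omega> t) < 0} = 1"
proof -
  interpret prob_space M by fact
  define E where "E C = {\<omega>\<in>space M. sup_ge_zero_on C (eta \<omega>)}" for C
  obtain D where D: "countable D" "D \<subseteq> K" "K \<subseteq> closure D"
    using separable by blast
  have "{\<omega>\<in>space M. (SUP t\<in>K. eta \<omega> t) < 0} = space M - E D"
    using SUP_less_zero_iff_not_sup_ge_zero_on[OF _ \<open>K \<noteq> {}\<close> _ D(2,3)] paths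
    unfolding E_def by auto
  moreover have "E D \<in> sets M"
    unfolding E_def using D meas by (intro sets_sup_ge_zero_on) auto
  moreover have "prob (E D) = 0"
  proof (rule ccontr)
    assume "prob (E D) \<noteq> 0"
    then obtain t where "t \<in> K" and near_t:
        "\<And>e. e > 0 \<Longrightarrow> prob (E (D \<inter> ball t e)) \<noteq> 0"
      using obtain_point_of_positive_sup_ge_zero_prob[of M K D eta, OF assms(1,2) D(1,2) meas] unfolding E_def by blast
    have "prob (E (D \<inter> ball t (1 / Suc m))) = 1" for m
      using zero_one[of "D \<inter> ball t (1 / Suc m)"] near_t[of "1 / Suc m"] D(1,2)
      unfolding E_def by (auto intro: countable_subset)
    then have "AE \<omega> in M. \<forall>m. \<omega> \<in> E (D \<inter> ball t (1 / Suc m))"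
      unfolding AE_all_countable by (intro allI AE_prob_1)
    then have "AE \<omega> in M. eta \<omega> t \<ge> 0"
    proof eventually_elim
      case (elim \<omega>)
      then have "\<omega> \<in> space M" "\<forall>e>0. sup_ge_zero_on (D \<inter> ball t e) (eta \<omega>)"
        unfolding E_def sup_ge_zero_on_balls_iff_inverse_Suc by blast+
      then show ?case
        using nonneg_if_sup_ge_zero_on_balls[OF _ \<open>t \<in> K\<close> D(2)] paths by blast
    qed
    with not_AE_nonneg \<open>t \<in> K\<close> show False by blast
  qed
  ultimately show ?thesis by (simp add: prob_compl)
qed

theorem mainTheorem1:
  fixes M :: "'a measure" and K :: "real set" and eta :: "'a \<Rightarrow> real \<Rightarrow> real"
  assumes "prob_space M"
    and "compact K" and "K \<subseteq> {0..1}" and "K \<noteq> {}"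
    and "\<forall>t\<in>K. (\<lambda>\<omega>. eta \<omega> t) \<in> borel_measurable M"
    and "\<forall>\<omega>\<in>space M. continuous_on K (eta \<omega>) \<and> (\<forall>t\<in>K. eta \<omega> t \<le> 0)"
    and "\<forall>t\<in>K. \<forall>x::real. x \<le> 0 \<longrightarrow> measure M {\<omega>\<in>space M. eta \<omega> t \<le> x} = exp x"
    and "max_stable M K eta"
  shows "measure M {\<omega>\<in>space M. (SUP t\<in>K. eta \<omega> t) < 0} = 1"
proof -
  interpret prob_space M by fact
  have meas: "\<And>t. t \<in> K \<Longrightarrow> (\<lambda>\<omega>. eta \<omega> t) \<in> borel_measurable M"
    using assms(5) by blast
  have margin: "measure M {\<omega>\<in>space M. eta \<omega> t \<le> y} = exp (min y 0)" if "t \<in> K" for t y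
  proof (cases "y \<le> 0")
    case False
    then have "{\<omega>\<in>space M. eta \<omega> t \<le> y} = space M" using assms(6) that by force
    with False show ?thesis by (simp add: prob_space)
  qed (use assms(7) that in \<open>simp add: min_def\<close>)
  have law: "process_law M K eta = distr (PiM {..<2::nat} (\<lambda>_. M)) (PiM K (\<lambda>_. borel))
               (\<lambda>\<omega>. \<lambda>t\<in>K. max (2 * eta (\<omega> 0) t) (2 * eta (\<omega> 1) t))"
    using max_stable_law_eq_max_of_two_copies[of M K eta] assms(1,8) meas margin by blast
  show ?thesis
  proof (rule SUP_less_zero_almost_surely[OF assms(1,2,4)])
    fix t assume "t \<in> K"
    show "\<not> (AE \<omega> in M. eta \<omega> t \<ge> 0)"
    proof
      assume "AE \<omega> in M. eta \<omega> t \<ge> 0"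
      then have "AE \<omega> in M. \<not> eta \<omega> t \<le> -1" by eventually_elim auto
      then have "measure M {\<omega>\<in>space M. eta \<omega> t \<le> -1} = 0" by (rule prob_eq_0_AE)
      with margin[OF \<open>t \<in> K\<close>, of "-1"] show False by simp
    qed
  qed (use meas assms(6) sup_ge_zero_on_event_zero_or_one[OF assms(1) _ law] in auto)
qed

end
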